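(* Let $n\ge 3$ be an integer. Every finite simple edge-pancyclic graph of order $n$ with at least one edge has diameter at most $\lfloor 2n/5\rfloor$. Moreover, there exists a finite simple edge-pancyclic graph of order $n$ with diameter exactly $\lfloor 2n/5\rfloor$. Hence the maximum diameter of an edge-pancyclic graph of order $n$ is $\lfloor 2n/5\rfloor$.
   Context: A $k$-cycle is a cycle of length $k$. A graph $G$ of order $n$ is edge-pancyclic if for every integer $k$ with $3\le k\le n$, every edge of $G$ lies in a $k$-cycle. If such a graph has an edge, that edge lies in a Hamilton cycle, so the graph is connected and its diameter is finite. *)

theory Defs
  imports Main "HOL-Library.Extended_Nat"
begin

definition simple_graph :: "'a set \<Rightarrow> ('a \<Rightarrow> 'a \<Rightarrow> bool) \<Rightarrow> bool" where
  "simple_graph V E \<longleftrightarrow> finite V \<and>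
     (\<forall>u v. E u v \<longrightarrow> u \<in> V \<and> v \<in> V \<and> u \<noteq> v \<and> E v u)"

definition is_cycle :: "'a set \<Rightarrow> ('a \<Rightarrow> 'a \<Rightarrow> bool) \<Rightarrow> 'a list \<Rightarrow> bool" where
  "is_cycle V E cs \<longleftrightarrow> length cs \<ge> 3 \<and> distinct cs \<and> set cs \<subseteq> V \<and>
     (\<forall>i < length cs. E (cs ! i) (cs ! ((i + 1) mod length cs)))"

definition edge_on_cycle :: "'a \<Rightarrow> 'a \<Rightarrow> 'a list \<Rightarrow> bool" where
  "edge_on_cycle u v cs \<longleftrightarrow>
     (\<exists>i < length cs. {cs ! i, cs ! ((i + 1) mod length cs)} = {u, v})"

definition edge_pancyclic :: "'a set \<Rightarrow> ('a \<Rightarrow> 'a \<Rightarrow> bool) \<Rightarrow> bool" where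
  "edge_pancyclic V E \<longleftrightarrow>
     (\<forall>k. 3 \<le> k \<and> k \<le> card V \<longrightarrow>
        (\<forall>u v. E u v \<longrightarrow> (\<exists>cs. is_cycle V E cs \<and> length cs = k \<and> edge_on_cycle u v cs)))"

definition walk :: "'a set \<Rightarrow> ('a \<Rightarrow> 'a \<Rightarrow> bool) \<Rightarrow> 'a list \<Rightarrow> bool" where
  "walk V E xs \<longleftrightarrow> xs \<noteq> [] \<and> set xs \<subseteq> V \<and>
     (\<forall>i. i + 1 < length xs \<longrightarrow> E (xs ! i) (xs ! (i + 1)))"

text \<open>Distance (\<infinity> if no walk), and diameter = supremum of distances.\<close>
definition gdist :: "'a set \<Rightarrow> ('a \<Rightarrow> 'a \<Rightarrow> bool) \<Rightarrow> 'a \<Rightarrow> 'a \<Rightarrow> enat" where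
  "gdist V E u v = (INF xs \<in> {xs. walk V E xs \<and> hd xs = u \<and> last xs = v}. enat (length xs - 1))"

definition diameter :: "'a set \<Rightarrow> ('a \<Rightarrow> 'a \<Rightarrow> bool) \<Rightarrow> enat" where
  "diameter V E = (SUP u \<in> V. SUP v \<in> V. gdist V E u v)"

end

theory Submission
  imports Defs "HOL-Library.Nat_Bijection" "HOL-Combinatorics.Transposition"
begin

text \<open>
  Fix a vertex x, let L i be the set of vertices at distance i from x and e the
  eccentricity of x. Deleting an arc of a Hamilton cycle leaves a path along which the distance
  from x changes by at most one; if the arc were a layer L i with 0 < i < e, this path would join
  x to a vertex at distance e without meeting L i. Hence every such layer has at least two
  vertices, and a layer with exactly two vertices spans no edge (a Hamilton cycle through that edge
  would contain it as an arc). As every edge lies on a triangle, L 1 has at least three vertices,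
  no two consecutive inner layers have two vertices each, and L e has at least two vertices if
  L (e - 1) has two. Summing the layer sizes gives 5 e \<le> 2 n.

  Replace the vertices 0, ..., D of a path, D = 2 n div 5, by layers of suitable sizes,
  join consecutive layers completely and make some layers cliques. Cycles that run forward through a
  window of consecutive layers and back along one further vertex of each inner layer have every
  length from 3 to n and can be moved onto any edge, while the end layers stay at distance D.
\<close>

section \<open>Walks, distances and cycles\<close>

lemma walk_iff_successively:
  "walk V E xs \<longleftrightarrow> xs \<noteq> [] \<and> set xs \<subseteq> V \<and> successively E xs"
  unfolding walk_def successively_conv_nth by simp

lemma successively_take: "successively P xs \<Longrightarrow> successively P (take k xs)"
  by (metis append_take_drop_id successively_append_iff)

lemma successively_drop: "successively P xs \<Longrightarrow> successively P (drop k xs)"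
  by (metis append_take_drop_id successively_append_iff)

lemma gdist_le_walk:
  assumes "walk V E xs" "hd xs = u" "last xs = v"
  shows "gdist V E u v \<le> enat (length xs - 1)"
  unfolding gdist_def using assms by (auto intro: INF_lower2)

lemma gdist_le_index:
  assumes "walk V E xs" "i < length xs"
  shows "gdist V E (hd xs) (xs ! i) \<le> enat i"
proof -
  have "walk V E (take (Suc i) xs)"
    using assms by (auto simp: walk_iff_successively successively_take dest: in_set_takeD)
  moreover have "hd (take (Suc i) xs) = hd xs"
    using assms(2) by (cases xs) auto
  moreover have "last (take (Suc i) xs) = xs ! i"
    using assms(2) by (simp add: take_Suc_conv_app_nth)
  ultimately show ?thesis
    using gdist_le_walk[of V E "take (Suc i) xs"] assms(2) by simp
qed

lemma gdist_attained:
  assumes "gdist V E u v = enat m"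
  shows "\<exists>xs. walk V E xs \<and> hd xs = u \<and> last xs = v \<and> length xs = Suc m"
proof -
  let ?S = "{xs. walk V E xs \<and> hd xs = u \<and> last xs = v}"
  have "?S \<noteq> {}"
  proof
    assume "?S = {}"
    then have "gdist V E u v = \<infinity>"
      by (simp only: gdist_def) (simp add: top_enat_def)
    with assms show False by simp
  qed
  then have "gdist V E u v \<in> (\<lambda>xs. enat (length xs - 1)) ` ?S"
    unfolding gdist_def Inf_enat_def by (auto intro: LeastI)
  then obtain xs where "xs \<in> ?S" "length xs - 1 = m"
    using assms by auto
  moreover from this have "xs \<noteq> []" by (auto simp: walk_def)
  ultimately show ?thesis by (intro exI[of _ xs]) auto
qed

lemma gdist_refl:
  assumes "x \<in> V" shows "gdist V E x x = 0"
proof -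
  have "gdist V E x x \<le> 0"
    using gdist_le_walk[of V E "[x]" x x] assms by (simp add: walk_def zero_enat_def)
  then show ?thesis by simp
qed

lemma gdist_eq_0D:
  assumes "gdist V E x w = 0" shows "w = x"
proof -
  obtain xs where "walk V E xs" "hd xs = x" "last xs = w" "length xs = 1"
    using gdist_attained[of V E x w 0] assms by (auto simp: zero_enat_def)
  then show ?thesis by (cases xs) auto
qed

lemma gdist_adj_le:
  assumes "simple_graph V E" "E w w'"
  shows "gdist V E x w' \<le> gdist V E x w + 1"
proof (cases "gdist V E x w")
  case (enat m)
  then obtain xs where xs: "walk V E xs" "hd xs = x" "last xs = w" "length xs = Suc m"
    using gdist_attained[OF enat] by blast
  have "w' \<in> V" using assms unfolding simple_graph_def by blast
  then have "walk V E (xs @ [w'])"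
    using xs assms(2) by (auto simp: walk_iff_successively successively_append_iff)
  then have "gdist V E x w' \<le> enat (Suc m)"
    using gdist_le_walk[of V E "xs @ [w']" x w'] xs by (cases xs) auto
  then show ?thesis using enat by (simp add: one_enat_def)
qed simp

lemma is_cycle_iff:
  "is_cycle V E cs \<longleftrightarrow> 3 \<le> length cs \<and> distinct cs \<and> set cs \<subseteq> V \<and>
     successively E cs \<and> E (last cs) (hd cs)"
proof (cases "cs = []")
  case False
  let ?L = "length cs"
  have wrap: "(i + 1) mod ?L = (if Suc i < ?L then Suc i else 0)" if "i < ?L" for i
  proof (cases "Suc i < ?L")
    case False
    then have "Suc i = ?L" using that by simp
    then show ?thesis by simp
  qed simp
  have "(\<forall>i<?L. E (cs ! i) (cs ! ((i + 1) mod ?L))) \<longleftrightarrow>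
      (\<forall>i. Suc i < ?L \<longrightarrow> E (cs ! i) (cs ! Suc i)) \<and> E (cs ! (?L - 1)) (cs ! 0)"
  proof (intro iffI conjI allI impI)
    fix i assume "\<forall>i<?L. E (cs ! i) (cs ! ((i + 1) mod ?L))" "Suc i < ?L"
    then have "E (cs ! i) (cs ! ((i + 1) mod ?L))" by (meson Suc_lessD)
    then show "E (cs ! i) (cs ! Suc i)" using wrap[of i] \<open>Suc i < ?L\<close> by simp
  next
    assume "\<forall>i<?L. E (cs ! i) (cs ! ((i + 1) mod ?L))"
    moreover have "?L - 1 < ?L" using False by simp
    ultimately have "E (cs ! (?L - 1)) (cs ! ((?L - 1 + 1) mod ?L))" by blast
    then show "E (cs ! (?L - 1)) (cs ! 0)" using False by simp
  next
    fix i assume adj: "(\<forall>i. Suc i < ?L \<longrightarrow> E (cs ! i) (cs ! Suc i)) \<and> E (cs ! (?L - 1)) (cs ! 0)"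
      and "i < ?L"
    show "E (cs ! i) (cs ! ((i + 1) mod ?L))"
    proof (cases "Suc i < ?L")
      case False
      then have "i = ?L - 1" using \<open>i < ?L\<close> by simp
      then show ?thesis using adj wrap[of i] \<open>i < ?L\<close> by simp
    qed (use adj wrap[of i] \<open>i < ?L\<close> in simp)
  qed
  with False show ?thesis
    unfolding is_cycle_def successively_conv_nth by (simp add: last_conv_nth hd_conv_nth)
qed (simp add: is_cycle_def)

lemma is_cycle_rotate1: "is_cycle V E cs \<Longrightarrow> is_cycle V E (rotate1 cs)"
proof (cases cs)
  case (Cons y ys)
  assume "is_cycle V E cs"
  moreover from this have "ys \<noteq> []" using Cons by (auto simp: is_cycle_iff)
  ultimately show ?thesis
    using Cons by (auto simp: is_cycle_iff successively_append_iff successively_Cons)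
qed (simp add: is_cycle_iff)

lemma is_cycle_rotate: "is_cycle V E cs \<Longrightarrow> is_cycle V E (rotate m cs)"
  by (induction m) (simp_all add: is_cycle_rotate1)

lemma rotate_to_front:
  assumes "a \<in> set cs"
  obtains m where "take 1 (rotate m cs) = [a]"
proof -
  obtain p where p: "p < length cs" "cs ! p = a" using assms by (metis in_set_conv_nth)
  then have "cs \<noteq> []" by auto
  then have "hd (rotate p cs) = a" using p hd_rotate_conv_nth[of cs p] by simp
  moreover have "rotate p cs \<noteq> []" using \<open>cs \<noteq> []\<close> by simp
  ultimately show thesis using that[of p] by (cases "rotate p cs") auto
qed

lemma is_cycle_set_eq:
  assumes "finite V" "is_cycle V E cs" "length cs = card V"
  shows "set cs = V"
proof -
  have "distinct cs" "set cs \<subseteq> V" using assms(2) by (auto simp: is_cycle_iff)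
  then show ?thesis using assms by (simp add: card_subset_eq distinct_card)
qed

lemma edge_on_cycle_split: "edge_on_cycle p q (xs @ p # q # ys)"
  unfolding edge_on_cycle_def by (rule exI[of _ "length xs"]) (auto simp: nth_append)

lemma edge_on_cycle_commute: "edge_on_cycle p q cs \<longleftrightarrow> edge_on_cycle q p cs"
  unfolding edge_on_cycle_def by (simp add: insert_commute)

lemma edge_on_cycle_in_set:
  assumes "edge_on_cycle p q cs" shows "p \<in> set cs" "q \<in> set cs"
proof -
  obtain i where i: "i < length cs" "{cs ! i, cs ! ((i + 1) mod length cs)} = {p, q}"
    using assms unfolding edge_on_cycle_def by blast
  then have "(i + 1) mod length cs < length cs" by (intro mod_less_divisor) (cases cs, auto)
  then have "{cs ! i, cs ! ((i + 1) mod length cs)} \<subseteq> set cs" using i(1) by simp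
  then have "{p, q} \<subseteq> set cs" unfolding i(2)[symmetric] .
  then show "p \<in> set cs" "q \<in> set cs" by auto
qed

lemma edge_on_cycle_map:
  assumes "edge_on_cycle p q cs" shows "edge_on_cycle (f p) (f q) (map f cs)"
proof -
  obtain i where i: "i < length cs" "{cs ! i, cs ! ((i + 1) mod length cs)} = {p, q}"
    using assms unfolding edge_on_cycle_def by blast
  then have "(i + 1) mod length cs < length cs" by (intro mod_less_divisor) (cases cs, auto)
  then have "{map f cs ! i, map f cs ! ((i + 1) mod length cs)} = f ` {p, q}"
    using i by (simp flip: i(2))
  then show ?thesis unfolding edge_on_cycle_def using i(1) by (intro exI[of _ i]) simp
qed

lemma is_cycle_map:
  assumes "inj f" "f ` V \<subseteq> V'" "\<And>x y. E x y \<Longrightarrow> E' (f x) (f y)" "is_cycle V E cs"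
  shows "is_cycle V' E' (map f cs)"
proof -
  have "cs \<noteq> []" "set cs \<subseteq> V" "successively E cs" "E (last cs) (hd cs)"
    using assms(4) by (auto simp: is_cycle_iff)
  then show ?thesis
    using assms by (auto simp: is_cycle_iff distinct_map inj_on_subset last_map hd_map
        successively_map elim!: successively_mono)
qed

lemma edge_on_cycle_rotate_front:
  assumes "edge_on_cycle u v cs" "2 \<le> length cs"
  shows "\<exists>m. set (take 2 (rotate m cs)) = {u, v}"
proof -
  obtain i where i: "i < length cs" "{cs ! i, cs ! ((i + 1) mod length cs)} = {u, v}"
    using assms unfolding edge_on_cycle_def by blast
  obtain a b ys where r: "rotate i cs = a # b # ys"
    using assms(2) by (metis Suc_le_length_iff length_rotate numeral_2_eq_2)
  have "rotate i cs ! 0 = cs ! i" "rotate i cs ! 1 = cs ! ((i + 1) mod length cs)"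
    using i(1) assms(2) nth_rotate[of 0 cs i] nth_rotate[of 1 cs i] by (auto simp del: length_greater_0_conv)
  then have "take 2 (rotate i cs) = [cs ! i, cs ! ((i + 1) mod length cs)]"
    unfolding r by (simp add: numeral_2_eq_2)
  then show ?thesis using i(2) by (intro exI[of _ i]) simp
qed

lemma triangle_common_neighbour:
  assumes "simple_graph V E" "is_cycle V E cs" "length cs = 3" "edge_on_cycle u v cs"
  shows "\<exists>c. c \<noteq> u \<and> c \<noteq> v \<and> E u c \<and> E v c"
proof -
  obtain p q r where cs: "cs = [p, q, r]"
    using assms(3) by (metis length_0_conv length_Suc_conv numeral_3_eq_3)
  have "distinct [p, q, r]" "E p q" "E q r" "E r p"
    using assms(2) unfolding cs is_cycle_iff by auto
  moreover have "E a b \<Longrightarrow> E b a" for a b using assms(1) by (auto simp: simple_graph_def)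
  ultimately have adj: "E x y" if "x \<in> {p, q, r}" "y \<in> {p, q, r}" "x \<noteq> y" for x y
    using that by auto
  have "u \<in> {p, q, r}" "v \<in> {p, q, r}" using edge_on_cycle_in_set[OF assms(4)] cs by auto
  moreover have "\<exists>c\<in>{p, q, r}. c \<noteq> u \<and> c \<noteq> v" using \<open>distinct [p, q, r]\<close> by auto
  ultimately show ?thesis using adj by blast
qed

lemma successively_lipschitz_hits:
  fixes f :: "'a \<Rightarrow> nat"
  assumes "successively (\<lambda>u v. f v \<le> Suc (f u) \<and> f u \<le> Suc (f v)) xs"
    and "a \<in> set xs" "f a \<le> i" "b \<in> set xs" "i \<le> f b"
  shows "\<exists>c\<in>set xs. f c = i"
  using assms
proof (induction xs arbitrary: a b)
  case (Cons y ys)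
  show ?case
  proof (cases "a \<in> set ys \<and> b \<in> set ys")
    case True
    then show ?thesis using Cons by (auto simp: successively_Cons)
  next
    case False
    show ?thesis
    proof (cases "f y = i \<or> ys = []")
      case False
      then have step: "f (hd ys) \<le> Suc (f y)" "f y \<le> Suc (f (hd ys))" "hd ys \<in> set ys"
        using Cons.prems(1) by (auto simp: successively_Cons)
      have IH: "successively (\<lambda>u v. f v \<le> Suc (f u) \<and> f u \<le> Suc (f v)) ys"
        using Cons.prems(1) by (cases ys) auto
      from \<open>\<not> (a \<in> set ys \<and> b \<in> set ys)\<close> Cons.prems False
      consider "a = y" "f y < i" "b \<in> set ys" | "b = y" "i < f y" "a \<in> set ys"
        by fastforce
      then show ?thesis
      proof cases
        case 1
        then show ?thesis using Cons.IH[OF IH _ _ 1(3)] Cons.prems(5) step by force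
      next
        case 2
        then show ?thesis using Cons.IH[OF IH 2(3)] Cons.prems(3) step by force
      qed
    qed (use Cons.prems in auto)
  qed
qed simp

section \<open>Distance layers of an edge-pancyclic graph\<close>

lemma five_mult_le_twice_sum:
  fixes s :: "nat \<Rightarrow> nat"
  assumes "2 \<le> e" "1 \<le> s 0" "3 \<le> s 1" "\<And>i. 0 < i \<Longrightarrow> i < e \<Longrightarrow> 2 \<le> s i"
    and "\<And>i. 0 < i \<Longrightarrow> Suc i < e \<Longrightarrow> s i = 2 \<Longrightarrow> s (Suc i) \<noteq> 2"
    and "s (e - 1) = 2 \<Longrightarrow> 2 \<le> s e" "1 \<le> s e"
  shows "5 * e \<le> 2 * (\<Sum>i\<le>e. s i)"
proof -
  \<comment> \<open>The extra unit banked at a term of at least 3 pays for a following term equal to 2.\<close>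
  have inv: "5 * j + 2 \<le> 2 * (\<Sum>i\<le>j. s i) \<and> (3 \<le> s j \<longrightarrow> 5 * j + 3 \<le> 2 * (\<Sum>i\<le>j. s i))"
    if "1 \<le> j" "j < e" for j
    using that
  proof (induction j rule: dec_induct)
    case base
    then show ?case using assms(2,3) by simp
  next
    case (step j)
    have "2 \<le> s (Suc j)" "2 \<le> s j" using assms(4) step by auto
    moreover have "s j = 2 \<Longrightarrow> s (Suc j) \<noteq> 2" using assms(5) step by auto
    ultimately show ?case using step.IH step by auto
  qed
  obtain j where ej: "e = Suc j" using assms(1) by (cases e) auto
  have "2 \<le> s j" "1 \<le> j" "j < e" using assms(1,4) ej by auto
  then show ?thesis using inv[of j] assms(6,7) ej by (cases "s j = 2") auto
qed

locale edge_pancyclic_graph =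
  fixes V :: "'a set" and E :: "'a \<Rightarrow> 'a \<Rightarrow> bool"
  assumes simple: "simple_graph V E" and pancyclic: "edge_pancyclic V E"
    and order_ge_3: "3 \<le> card V" and has_edge: "\<exists>u v. E u v"
begin

lemma finite_V: "finite V"
  using simple by (simp add: simple_graph_def)

lemma adj_sym: "E a b \<Longrightarrow> E b a"
  using simple by (auto simp: simple_graph_def)

lemma adj_in_V: "E a b \<Longrightarrow> a \<in> V \<and> b \<in> V"
  using simple by (auto simp: simple_graph_def)

lemma adj_irrefl: "E a b \<Longrightarrow> a \<noteq> b"
  using simple by (auto simp: simple_graph_def)

lemma hamilton_cycle_through:
  assumes "E a b"
  shows "\<exists>cs. is_cycle V E cs \<and> set cs = V \<and> edge_on_cycle a b cs"
  using pancyclic order_ge_3 assms is_cycle_set_eq[OF finite_V]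
  unfolding edge_pancyclic_def by blast

lemma hamilton_cycle: "\<exists>cs. is_cycle V E cs \<and> set cs = V"
  using hamilton_cycle_through has_edge by blast

lemma common_neighbour:
  assumes "E a b"
  shows "\<exists>c. c \<noteq> a \<and> c \<noteq> b \<and> E a c \<and> E b c"
proof -
  obtain cs where "is_cycle V E cs" "length cs = 3" "edge_on_cycle a b cs"
    using pancyclic order_ge_3 assms unfolding edge_pancyclic_def by blast
  then show ?thesis using triangle_common_neighbour[OF simple] by blast
qed

end

locale rooted_edge_pancyclic_graph = edge_pancyclic_graph +
  fixes x assumes root_in_V: "x \<in> V"
begin

definition level :: "'a \<Rightarrow> nat" where
  "level w = the_enat (gdist V E x w)"

definition layer :: "nat \<Rightarrow> 'a set" where
  "layer i = {w \<in> V. level w = i}"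

definition ecc :: nat where
  "ecc = Max (level ` V)"

lemma gdist_eq_level:
  assumes "w \<in> V" shows "gdist V E x w = enat (level w)"
proof -
  obtain H where H: "is_cycle V E H" "set H = V" using hamilton_cycle by blast
  then obtain p where p: "p < length H" "H ! p = x" using root_in_V by (metis in_set_conv_nth)
  define R where "R = rotate p H"
  have "H \<noteq> []" using p by auto
  then have "hd R = x" using p hd_rotate_conv_nth[of H p] unfolding R_def by simp
  moreover have "walk V E R"
    using is_cycle_rotate[OF H(1)] unfolding R_def by (auto simp: is_cycle_iff walk_iff_successively)
  moreover obtain t where "t < length R" "R ! t = w"
    using assms H(2) unfolding R_def by (metis in_set_conv_nth set_rotate)
  ultimately have "gdist V E x w \<le> enat t" using gdist_le_index[of V E R t] by simp
  then show ?thesis unfolding level_def by (cases "gdist V E x w") auto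
qed

lemma level_adj: "E a b \<Longrightarrow> level b \<le> Suc (level a)"
  using gdist_adj_le[OF simple, of a b x] gdist_eq_level adj_in_V by (simp add: one_enat_def)

lemma level_root: "level x = 0"
  using gdist_refl[OF root_in_V, of E] unfolding level_def by (simp add: zero_enat_def)

lemma level_eq_0D: "w \<in> V \<Longrightarrow> level w = 0 \<Longrightarrow> w = x"
  using gdist_eq_level gdist_eq_0D by (metis zero_enat_def)

lemma level_pred:
  assumes "w \<in> V" "level w = Suc m"
  shows "\<exists>w'. E w' w \<and> level w' = m"
proof -
  obtain xs where xs: "walk V E xs" "hd xs = x" "last xs = w" "length xs = Suc (Suc m)"
    using gdist_attained[of V E x w "Suc m"] gdist_eq_level[OF assms(1)] assms(2) by auto
  have "E (xs ! m) (xs ! Suc m)" using xs(1,4) unfolding walk_def by auto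
  moreover have "xs ! Suc m = w" using xs(3,4) by (cases xs rule: rev_cases) (auto simp: nth_append)
  ultimately have adj: "E (xs ! m) w" by simp
  have "level (xs ! m) \<le> m"
    using gdist_le_index[OF xs(1), of m] xs gdist_eq_level adj_in_V[OF adj] by simp
  moreover have "Suc m \<le> Suc (level (xs ! m))" using level_adj[OF adj] assms(2) by simp
  ultimately show ?thesis using adj by (intro exI[of _ "xs ! m"]) auto
qed

lemma level_le_ecc: "w \<in> V \<Longrightarrow> level w \<le> ecc"
  unfolding ecc_def using finite_V by auto

lemma ecc_attained: "\<exists>z\<in>V. level z = ecc"
proof -
  have "ecc \<in> level ` V" unfolding ecc_def using finite_V root_in_V by (intro Max_in) auto
  then show ?thesis by auto
qed

lemma finite_layer: "finite (layer i)"
  unfolding layer_def using finite_V by auto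

lemma layer_nonempty:
  assumes "i \<le> ecc" shows "layer i \<noteq> {}"
proof -
  have "\<exists>w'\<in>V. level w' = i" if "w \<in> V" "i \<le> level w" for w
    using that
  proof (induction "level w" arbitrary: w)
    case (Suc k)
    show ?case
    proof (cases "i = Suc k")
      case False
      obtain w' where "E w' w" "level w' = k" using level_pred Suc by metis
      then show ?thesis using Suc.hyps(1)[of w'] False Suc.prems Suc.hyps(2) adj_in_V by auto
    qed (use Suc.prems Suc.hyps(2) in auto)
  qed auto
  then show ?thesis using ecc_attained assms unfolding layer_def by fastforce
qed

lemma layer_not_arc:
  assumes "0 < i" "i < ecc" "is_cycle V E cs" "set cs = V"
  shows "set (take r (rotate m cs)) \<noteq> layer i"
proof
  assume arc: "set (take r (rotate m cs)) = layer i"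
  define R where "R = rotate m cs"
  define P where "P = drop r R"
  have R: "is_cycle V E R" "set R = V" using assms(3,4) is_cycle_rotate unfolding R_def by auto
  then have disj: "set (take r R) \<inter> set P = {}"
    unfolding P_def by (simp add: is_cycle_iff set_take_disj_set_drop_if_distinct)
  have un: "set (take r R) \<union> set P = V"
    using R(2) unfolding P_def by (metis append_take_drop_id set_append)
  have "x \<notin> layer i" using level_root assms(1) unfolding layer_def by simp
  then have "x \<in> set P" using un arc root_in_V unfolding R_def by blast
  moreover obtain z where "z \<in> V" "level z = ecc" using ecc_attained by blast
  moreover from this have "z \<notin> layer i" using assms(2) unfolding layer_def by simp
  ultimately have "x \<in> set P" "z \<in> set P" "level z = ecc" using un arc unfolding R_def by blast+
  moreover have "successively (\<lambda>u v. level v \<le> Suc (level u) \<and> level u \<le> Suc (level v)) P"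
  proof (rule successively_mono)
    show "successively E P" using R unfolding P_def by (simp add: is_cycle_iff successively_drop)
  qed (use level_adj adj_sym in blast)
  ultimately obtain c where "c \<in> set P" "level c = i"
    using successively_lipschitz_hits[of level P x i z] level_root assms(2) by auto
  moreover from this have "c \<in> V" using un by auto
  ultimately show False using disj arc unfolding R_def layer_def by auto
qed

lemma card_layer_le_1:
  assumes "i \<le> ecc" "card (layer i) < 2" obtains a where "layer i = {a}"
proof -
  have "card (layer i) \<noteq> 0" using layer_nonempty[OF assms(1)] finite_layer by simp
  then have "card (layer i) = 1" using assms(2) by linarith
  then show thesis using that card_1_singletonE by blast
qed

lemma card_layer_ge_2:
  assumes "0 < i" "i < ecc" shows "2 \<le> card (layer i)"
proof (rule ccontr)
  assume "\<not> 2 \<le> card (layer i)"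
  then obtain a where a: "layer i = {a}" using card_layer_le_1 assms(2) by (meson less_imp_le not_le)
  obtain H where H: "is_cycle V E H" "set H = V" using hamilton_cycle by blast
  moreover have "a \<in> set H" using a H(2) unfolding layer_def by auto
  then obtain m where "take 1 (rotate m H) = [a]" by (rule rotate_to_front)
  ultimately show False using layer_not_arc[OF assms, of H 1 m] a by simp
qed

lemma card_layer_eq_2_no_edge:
  assumes "0 < i" "i < ecc" "card (layer i) = 2" "a \<in> layer i" "b \<in> layer i"
  shows "\<not> E a b"
proof
  assume ab: "E a b"
  then have "card {a, b} = card (layer i)" using adj_irrefl assms(3) by simp
  then have ab_layer: "{a, b} = layer i"
    using assms(4,5) finite_layer by (intro card_subset_eq) auto
  obtain cs where cs: "is_cycle V E cs" "set cs = V" "edge_on_cycle a b cs"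
    using hamilton_cycle_through[OF ab] by blast
  moreover have "2 \<le> length cs" using cs(1) by (simp add: is_cycle_iff)
  ultimately have "\<exists>m. set (take 2 (rotate m cs)) = {a, b}" by (intro edge_on_cycle_rotate_front)
  then obtain m where "set (take 2 (rotate m cs)) = layer i" using ab_layer by auto
  then show False using layer_not_arc[OF assms(1,2) cs(1,2)] by blast
qed

lemma layer_triangle:
  assumes "Suc i \<le> ecc"
  obtains a c w where "a \<in> layer i" "c \<in> layer (Suc i)" "w \<in> layer i \<union> layer (Suc i)"
    "w \<noteq> a" "w \<noteq> c" "E a c" "E a w" "E c w"
proof -
  obtain c where c: "c \<in> V" "level c = Suc i"
    using layer_nonempty[OF assms] unfolding layer_def by auto
  then obtain a where a: "E a c" "level a = i" using level_pred by blast
  obtain w where w: "w \<noteq> a" "w \<noteq> c" "E a w" "E c w" using common_neighbour[OF a(1)] by blast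
  have "level w \<le> Suc i" "Suc i \<le> Suc (level w)"
    using level_adj[OF w(3)] level_adj[OF adj_sym[OF w(4)]] a(2) c(2) by auto
  then have "w \<in> layer i \<union> layer (Suc i)" using adj_in_V[OF w(3)] unfolding layer_def by auto
  moreover have "a \<in> layer i" "c \<in> layer (Suc i)" using a c adj_in_V unfolding layer_def by auto
  ultimately show thesis using that a(1) w by blast
qed

lemma card_layer_1_ge_3:
  assumes "2 \<le> ecc" shows "3 \<le> card (layer 1)"
proof (rule ccontr)
  assume "\<not> 3 \<le> card (layer 1)"
  then have two: "card (layer 1) = 2" using card_layer_ge_2[of 1] assms by simp
  have "1 \<le> ecc" using assms by simp
  then obtain a c w where acw: "a \<in> layer 0" "c \<in> layer 1" "w \<in> layer 0 \<union> layer 1"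
    "w \<noteq> a" "w \<noteq> c" "E c w"
    by (rule layer_triangle[of 0, folded One_nat_def])
  have "layer 0 = {x}" using level_eq_0D level_root root_in_V unfolding layer_def by blast
  then have "w \<in> layer 1" using acw(1,3,4) by auto
  then show False using card_layer_eq_2_no_edge[of 1 c w] two assms acw by simp
qed

lemma card_consecutive_layers:
  assumes "0 < i" "Suc i < ecc" "card (layer i) = 2" shows "card (layer (Suc i)) \<noteq> 2"
proof
  assume two: "card (layer (Suc i)) = 2"
  obtain a c w where acw: "a \<in> layer i" "c \<in> layer (Suc i)" "w \<in> layer i \<union> layer (Suc i)"
    "w \<noteq> a" "w \<noteq> c" "E a c" "E a w" "E c w"
    using less_imp_le[OF assms(2)] by (rule layer_triangle)
  then consider "w \<in> layer i" | "w \<in> layer (Suc i)" by blast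
  then show False
  proof cases
    case 1
    then show False using card_layer_eq_2_no_edge[of i a w] Suc_lessD[OF assms(2)] assms(1,3) acw(1,7) by blast
  next
    case 2
    then show False using card_layer_eq_2_no_edge[of "Suc i" c w] assms(2) two acw(2,8) by blast
  qed
qed

lemma card_last_layer:
  assumes "2 \<le> ecc" "card (layer (ecc - 1)) = 2" shows "2 \<le> card (layer ecc)"
proof (rule ccontr)
  obtain j where j: "ecc = Suc j" using assms(1) by (cases ecc) auto
  assume "\<not> 2 \<le> card (layer ecc)"
  then have "card (layer ecc) < 2" by simp
  then obtain z where z: "layer (Suc j) = {z}" using card_layer_le_1[OF le_refl] j by metis
  obtain a c w where acw: "a \<in> layer j" "c \<in> layer (Suc j)" "w \<in> layer j \<union> layer (Suc j)"
    "w \<noteq> a" "w \<noteq> c" "E a c" "E a w" "E c w"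
    using j by (rule layer_triangle[of j, OF eq_imp_le[OF sym]])
  then have "w \<in> layer j" using z by auto
  then show False using card_layer_eq_2_no_edge[of j a w] assms acw j by simp
qed

lemma sum_card_layers: "(\<Sum>i\<le>ecc. card (layer i)) \<le> card V"
proof -
  have "(\<Sum>i\<le>ecc. card (layer i)) = card (\<Union>i\<le>ecc. layer i)"
    by (rule card_UN_disjoint[symmetric]) (auto simp: layer_def finite_V)
  also have "\<dots> \<le> card V" by (rule card_mono[OF finite_V]) (auto simp: layer_def)
  finally show ?thesis .
qed

lemma ecc_bound:
  assumes "2 \<le> ecc" shows "5 * ecc \<le> 2 * card V"
proof -
  have nonempty: "1 \<le> card (layer i)" if "i \<le> ecc" for i
    using layer_nonempty[OF that] finite_layer by (simp add: Suc_le_eq card_gt_0_iff)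
  have "5 * ecc \<le> 2 * (\<Sum>i\<le>ecc. card (layer i))"
  proof (rule five_mult_le_twice_sum[OF assms])
    show "1 \<le> card (layer 0)" "1 \<le> card (layer ecc)" using nonempty by simp_all
    show "3 \<le> card (layer 1)" using card_layer_1_ge_3[OF assms] .
    show "2 \<le> card (layer i)" if "0 < i" "i < ecc" for i using card_layer_ge_2 that .
    show "card (layer (Suc i)) \<noteq> 2" if "0 < i" "Suc i < ecc" "card (layer i) = 2" for i
      using card_consecutive_layers that .
    show "2 \<le> card (layer ecc)" if "card (layer (ecc - 1)) = 2"
      using card_last_layer[OF assms that] .
  qed
  then show ?thesis using sum_card_layers by linarith
qed

end

lemma (in edge_pancyclic_graph) diameter_le: "diameter V E \<le> enat (2 * card V div 5)"
  unfolding diameter_def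
proof (intro SUP_least)
  fix x y assume "x \<in> V" "y \<in> V"
  then interpret rooted_edge_pancyclic_graph V E x by unfold_locales
  have "level y \<le> 2 * card V div 5"
  proof (cases "2 \<le> ecc")
    case True
    then have "ecc \<le> 2 * card V div 5" using ecc_bound by (simp add: less_eq_div_iff_mult_less_eq)
    then show ?thesis using level_le_ecc[OF \<open>y \<in> V\<close>] by linarith
  next
    case False
    moreover have "1 \<le> 2 * card V div 5" using order_ge_3 by simp
    ultimately show ?thesis using level_le_ecc[OF \<open>y \<in> V\<close>] by linarith
  qed
  then show "gdist V E x y \<le> enat (2 * card V div 5)" using gdist_eq_level[OF \<open>y \<in> V\<close>] by simp
qed

section \<open>Blow-ups of a path\<close>

lemma successively_upt:
  "(\<And>t. m \<le> t \<Longrightarrow> Suc t < k \<Longrightarrow> P t (Suc t)) \<Longrightarrow> successively P [m..<k]"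
  by (auto simp: successively_conv_nth)

lemma hd_concat_map:
  "(\<And>j. j \<in> set js \<Longrightarrow> f j \<noteq> []) \<Longrightarrow> js \<noteq> [] \<Longrightarrow> hd (concat (map f js)) = hd (f (hd js))"
  by (cases js) auto

lemma last_concat_map:
  "(\<And>j. j \<in> set js \<Longrightarrow> f j \<noteq> []) \<Longrightarrow> js \<noteq> [] \<Longrightarrow> last (concat (map f js)) = last (f (last js))"
  by (induction js) (auto simp: concat_eq_Nil_conv)

lemma successively_concat_map:
  assumes "\<And>j. j \<in> set js \<Longrightarrow> f j \<noteq> [] \<and> successively P (f j)"
    and "successively (\<lambda>i j. P (last (f i)) (hd (f j))) js"
  shows "successively P (concat (map f js))"
  using assms
proof (induction js rule: induct_list012)
  case (3 i j js)
  have "hd (concat (map f (j # js))) = hd (f j)" using "3.prems"(1) by simp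
  then show ?case using 3 by (auto simp: successively_append_iff)
qed auto

lemma distinct_concat_map_tagged:
  assumes "distinct js" "\<And>j. j \<in> set js \<Longrightarrow> distinct (f j) \<and> (\<forall>p\<in>set (f j). fst p = j)"
  shows "distinct (concat (map f js))"
  using assms
proof (induction js)
  case (Cons j js)
  have "fst q \<noteq> j" if q: "q \<in> set (concat (map f js))" for q
  proof -
    obtain j' where "j' \<in> set js" "q \<in> set (f j')" using q by auto
    then show ?thesis using Cons.prems(1) Cons.prems(2)[of j'] by auto
  qed
  then have "set (f j) \<inter> set (concat (map f js)) = {}" using Cons.prems(2)[of j] by auto
  then show ?case using Cons by auto
qed simp

lemma sum_between_bounds:
  fixes lo hi :: "'a \<Rightarrow> nat"
  assumes "finite S" "\<And>j. j \<in> S \<Longrightarrow> lo j \<le> hi j" "sum lo S \<le> k" "k \<le> sum hi S"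
  shows "\<exists>c. (\<forall>j\<in>S. lo j \<le> c j \<and> c j \<le> hi j) \<and> sum c S = k"
  using assms
proof (induction S arbitrary: k rule: finite_induct)
  case (insert x S)
  \<comment> \<open>Give x as little as possible while leaving a total that S can still reach.\<close>
  define cx where "cx = max (lo x) (k - sum hi S)"
  have "sum lo S \<le> sum hi S" using insert.prems by (intro sum_mono) auto
  then have cx: "lo x \<le> cx" "cx \<le> hi x" "cx \<le> k" "sum lo S \<le> k - cx" "k - cx \<le> sum hi S"
    using insert unfolding cx_def by auto
  then obtain c where c: "\<forall>j\<in>S. lo j \<le> c j \<and> c j \<le> hi j" "sum c S = k - cx"
    using insert.IH[of "k - cx"] insert.prems(1) by auto
  have "sum (c(x := cx)) S = sum c S" using insert.hyps by (intro sum.cong) auto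
  then show ?case using insert.hyps c cx by (intro exI[of _ "c(x := cx)"]) auto
qed simp

lemma interval_chain_cover:
  fixes lo hi :: "nat \<Rightarrow> nat"
  assumes "lo 0 \<le> k" "k \<le> hi T" "\<And>t. t < T \<Longrightarrow> lo (Suc t) \<le> Suc (hi t)"
  shows "\<exists>t\<le>T. lo t \<le> k \<and> k \<le> hi t"
  using assms
proof (induction T)
  case (Suc T)
  show ?case
  proof (cases "k \<le> hi T")
    case True
    moreover have "\<And>t. t < T \<Longrightarrow> lo (Suc t) \<le> Suc (hi t)" using Suc.prems(3) by simp
    ultimately obtain t where "t \<le> T" "lo t \<le> k" "k \<le> hi t" using Suc.IH Suc.prems(1) by blast
    then show ?thesis by (intro exI[of _ t]) auto
  next
    case False
    then have "lo (Suc T) \<le> k" using Suc.prems(3)[of T] by simp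
    then show ?thesis using Suc.prems(2) by (intro exI[of _ "Suc T"]) auto
  qed
qed auto

definition spare_layer :: "nat \<Rightarrow> (nat \<Rightarrow> nat) \<Rightarrow> (nat \<Rightarrow> bool) \<Rightarrow> nat \<Rightarrow> bool" where
  "spare_layer D sz clique j \<longleftrightarrow> clique j \<and> (if j = 0 \<or> j = D then 2 \<le> sz j else 3 \<le> sz j)"

text \<open>
  A spare layer is a clique in which
  every window cycle (below) may use one vertex more than it must.
\<close>

locale path_blowup =
  fixes D :: nat and sz :: "nat \<Rightarrow> nat" and clique :: "nat \<Rightarrow> bool"
  assumes depth_pos: "1 \<le> D"
    and sz_pos: "\<And>j. j \<le> D \<Longrightarrow> 1 \<le> sz j"
    and sz_0: "sz 0 = 1"
    and sz_D: "2 \<le> D \<Longrightarrow> sz D = 1"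
    and sz_inner: "\<And>j. 0 < j \<Longrightarrow> j < D \<Longrightarrow> 2 \<le> sz j"
    and sz_inner_clique: "\<And>j. 0 < j \<Longrightarrow> j < D \<Longrightarrow> clique j \<Longrightarrow> 3 \<le> sz j"
    and sz_non_clique: "\<And>j. j \<le> D \<Longrightarrow> \<not> clique j \<Longrightarrow> sz j \<le> 2"
    and clique_0: "clique 0" and clique_D: "clique D"
    and spare_pairs: "\<And>i. i < D \<Longrightarrow> spare_layer D sz clique i \<or> spare_layer D sz clique (Suc i)"
begin

definition verts :: "(nat \<times> nat) set" where
  "verts = {p. fst p \<le> D \<and> snd p < sz (fst p)}"

definition adj :: "nat \<times> nat \<Rightarrow> nat \<times> nat \<Rightarrow> bool" where
  "adj p q \<longleftrightarrow> p \<in> verts \<and> q \<in> verts \<and> p \<noteq> q \<and>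
     (Suc (fst p) = fst q \<or> Suc (fst q) = fst p \<or> (fst p = fst q \<and> clique (fst p)))"

lemma mem_verts: "(j, t) \<in> verts \<longleftrightarrow> j \<le> D \<and> t < sz j"
  unfolding verts_def by simp

lemma adj_cross: "p \<in> verts \<Longrightarrow> q \<in> verts \<Longrightarrow> Suc (fst p) = fst q \<or> Suc (fst q) = fst p \<Longrightarrow> adj p q"
  unfolding adj_def by auto

lemma adj_sym: "adj p q \<Longrightarrow> adj q p"
  unfolding adj_def by auto

lemma adj_layer_le: "adj p q \<Longrightarrow> fst q \<le> Suc (fst p)"
  unfolding adj_def by auto

lemma successively_adj_layer:
  assumes "j \<le> D" "set ts \<subseteq> {..<sz j}" "distinct ts" "length ts \<le> 1 \<or> clique j"
  shows "successively adj (map (Pair j) ts)"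
proof (cases "length ts \<le> 1")
  case True
  then show ?thesis by (cases ts) auto
next
  case False
  have "ts ! i \<noteq> ts ! Suc i" if "Suc i < length ts" for i
    using assms(3) that by (simp add: nth_eq_iff_index_eq)
  moreover have "ts ! i < sz j" if "i < length ts" for i using assms(2) nth_mem[OF that] by auto
  ultimately show ?thesis using False assms(1,4)
    by (auto simp: successively_conv_nth adj_def mem_verts)
qed

text \<open>
  A window cycle on layers a..b runs forward through these layers, using c j vertices of each
  layer j: vertices 0, ..., c j - 1 of the end layers and vertices 0, 2, ..., c j - 1 of the inner
  layers; it returns along the vertices (j, 1) of the inner layers.
\<close>

definition picks :: "(nat \<Rightarrow> nat) \<Rightarrow> nat \<Rightarrow> nat \<Rightarrow> nat \<Rightarrow> nat list" where
  "picks c a b j = (if j = a \<or> j = b then [0..<c j] else 0 # [2..<c j])"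

definition block :: "(nat \<Rightarrow> nat) \<Rightarrow> nat \<Rightarrow> nat \<Rightarrow> nat \<Rightarrow> (nat \<times> nat) list" where
  "block c a b j = map (Pair j) (picks c a b j)"

definition forward :: "(nat \<Rightarrow> nat) \<Rightarrow> nat \<Rightarrow> nat \<Rightarrow> (nat \<times> nat) list" where
  "forward c a b = concat (map (block c a b) [a..<Suc b])"

definition backward :: "nat \<Rightarrow> nat \<Rightarrow> (nat \<times> nat) list" where
  "backward a b = map (\<lambda>j. (j, 1)) (rev [Suc a..<b])"

definition window :: "(nat \<Rightarrow> nat) \<Rightarrow> nat \<Rightarrow> nat \<Rightarrow> (nat \<times> nat) list" where
  "window c a b = forward c a b @ backward a b"

definition admissible :: "(nat \<Rightarrow> nat) \<Rightarrow> nat \<Rightarrow> nat \<Rightarrow> bool" where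
  "admissible c a b \<longleftrightarrow> a < b \<and> b \<le> D \<and>
     1 \<le> c a \<and> c a \<le> (if clique a then sz a else 1) \<and> 1 \<le> c b \<and> c b \<le> (if clique b then sz b else 1) \<and>
     (\<forall>j. a < j \<and> j < b \<longrightarrow> 2 \<le> c j \<and> c j \<le> sz j) \<and> 3 \<le> sum c {a..b}"

context
  fixes c a b assumes adm: "admissible c a b"
begin

lemma adm_bounds: "a < b" "b \<le> D"
  using adm unfolding admissible_def by auto

lemma adm_inner: "a < j \<Longrightarrow> j < b \<Longrightarrow> 2 \<le> c j \<and> c j \<le> sz j"
  using adm unfolding admissible_def by blast

lemma picks_Cons: "a \<le> j \<Longrightarrow> j \<le> b \<Longrightarrow> \<exists>ts. picks c a b j = 0 # ts"
  using adm unfolding admissible_def picks_def by (auto simp: upt_conv_Cons)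

lemma distinct_picks: "distinct (picks c a b j)"
  unfolding picks_def by auto

lemma length_picks:
  "a \<le> j \<Longrightarrow> j \<le> b \<Longrightarrow> length (picks c a b j) = (if j = a \<or> j = b then c j else c j - 1)"
  using adm_inner[of j] unfolding picks_def by auto

lemma one_notin_picks: "a < j \<Longrightarrow> j < b \<Longrightarrow> 1 \<notin> set (picks c a b j)"
  unfolding picks_def by auto

lemma set_picks_clique:
  assumes "a \<le> j" "j \<le> b"
  shows "set (picks c a b j) \<subseteq> {..<sz j}" "length (picks c a b j) \<le> 1 \<or> clique j"
proof -
  have "c j \<le> sz j \<and> (c j \<le> 1 \<or> clique j)" if "j = a \<or> j = b"
    using that adm sz_pos[of a] sz_pos[of b] adm_bounds unfolding admissible_def
    by (auto split: if_splits)
  moreover have "2 \<le> c j \<and> c j \<le> sz j \<and> (c j \<le> 2 \<or> clique j)" if "a < j" "j < b"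
    using adm_inner[OF that] sz_non_clique[of j] adm_bounds that by force
  ultimately show "set (picks c a b j) \<subseteq> {..<sz j}" "length (picks c a b j) \<le> 1 \<or> clique j"
    using assms unfolding picks_def by auto
qed

lemma block_nonempty: "a \<le> j \<Longrightarrow> j \<le> b \<Longrightarrow> block c a b j \<noteq> []"
  using picks_Cons unfolding block_def by fastforce

lemma hd_block: "a \<le> j \<Longrightarrow> j \<le> b \<Longrightarrow> hd (block c a b j) = (j, 0)"
  using picks_Cons unfolding block_def by fastforce

lemma fst_block: "p \<in> set (block c a b j) \<Longrightarrow> fst p = j"
  unfolding block_def by auto

lemma distinct_block: "distinct (block c a b j)"
  unfolding block_def using distinct_picks by (simp add: distinct_map inj_on_def)

lemma set_block: "a \<le> j \<Longrightarrow> j \<le> b \<Longrightarrow> set (block c a b j) \<subseteq> verts"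
  using set_picks_clique(1)[of j] adm_bounds by (auto simp: block_def mem_verts)

lemma successively_block: "a \<le> j \<Longrightarrow> j \<le> b \<Longrightarrow> successively adj (block c a b j)"
  unfolding block_def using set_picks_clique[of j] adm_bounds distinct_picks
  by (intro successively_adj_layer) auto

lemma last_block:
  assumes "a \<le> j" "j \<le> b" shows "last (block c a b j) \<in> verts" "fst (last (block c a b j)) = j"
  using block_nonempty[OF assms] set_block[OF assms] fst_block last_in_set by blast+

lemma inner_one_verts: "a < j \<Longrightarrow> j < b \<Longrightarrow> (j, 1) \<in> verts"
  using sz_inner[of j] adm_bounds by (simp add: mem_verts)

lemma window_subset: "set (window c a b) \<subseteq> verts"
proof -
  have "set (block c a b j) \<subseteq> verts" if "j \<in> set [a..<Suc b]" for j
    using that by (intro set_block) auto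
  then show ?thesis using inner_one_verts by (auto simp: window_def forward_def backward_def)
qed

lemma window_distinct: "distinct (window c a b)"
proof -
  have "distinct (forward c a b)"
    unfolding forward_def
  proof (rule distinct_concat_map_tagged)
    fix j
    show "distinct (block c a b j) \<and> (\<forall>p\<in>set (block c a b j). fst p = j)"
      using distinct_block fst_block by blast
  qed simp
  moreover have "(j, 1) \<notin> set (block c a b j')" if "a < j" "j < b" for j j'
    using one_notin_picks[OF that] by (auto simp: block_def)
  ultimately show ?thesis
    unfolding window_def forward_def backward_def by (auto simp: distinct_map inj_on_def)
qed

lemma window_length: "length (window c a b) = sum c {a..b}"
proof -
  have split: "{a..b} = insert a (insert b {Suc a..<b})" using adm_bounds by auto
  have "(\<Sum>j\<in>{Suc a..<b}. c j) = (\<Sum>j\<in>{Suc a..<b}. (c j - 1) + 1)"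
  proof (rule sum.cong)
    fix j assume "j \<in> {Suc a..<b}"
    then have "2 \<le> c j" using adm_inner[of j] by auto
    then show "c j = c j - 1 + 1" by simp
  qed simp
  then have inner: "(\<Sum>j\<in>{Suc a..<b}. c j) = (\<Sum>j\<in>{Suc a..<b}. c j - 1) + (b - Suc a)"
    by (simp add: sum_Suc)
  have "(\<Sum>j\<in>{Suc a..<b}. length (picks c a b j)) = (\<Sum>j\<in>{Suc a..<b}. c j - 1)"
    using length_picks by (intro sum.cong) (auto simp: Suc_le_eq)
  then have "(\<Sum>j\<in>{a..b}. length (picks c a b j)) = c a + c b + (\<Sum>j\<in>{Suc a..<b}. c j - 1)"
    unfolding split using adm_bounds length_picks[of a] length_picks[of b] by simp
  moreover have "length (forward c a b) = (\<Sum>j\<in>{a..b}. length (picks c a b j))"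
    by (simp add: forward_def length_concat block_def comp_def sum_list_distinct_conv_sum_set
        atLeastLessThanSuc_atLeastAtMost del: upt_Suc)
  ultimately show ?thesis
    unfolding window_def backward_def split using adm_bounds inner by simp
qed

lemma forward_ends:
  "forward c a b \<noteq> []" "hd (forward c a b) = (a, 0)"
  "last (forward c a b) \<in> verts" "fst (last (forward c a b)) = b"
proof -
  have ne: "\<And>j. j \<in> set [a..<Suc b] \<Longrightarrow> block c a b j \<noteq> []" by (rule block_nonempty) auto
  have upt_ne: "[a..<Suc b] \<noteq> []" using adm_bounds by (simp del: upt_Suc)
  show "forward c a b \<noteq> []" using ne upt_ne unfolding forward_def by (auto simp del: upt_Suc)
  have "hd (forward c a b) = hd (block c a b (hd [a..<Suc b]))"
    unfolding forward_def by (rule hd_concat_map[OF ne upt_ne])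
  then show "hd (forward c a b) = (a, 0)" using hd_block[of a] adm_bounds by simp
  have "last (forward c a b) = last (block c a b (last [a..<Suc b]))"
    unfolding forward_def by (rule last_concat_map[OF ne upt_ne])
  then show "last (forward c a b) \<in> verts" "fst (last (forward c a b)) = b"
    using last_block[of b] adm_bounds by simp_all
qed

lemma successively_forward: "successively adj (forward c a b)"
  unfolding forward_def
proof (rule successively_concat_map)
  fix j assume "j \<in> set [a..<Suc b]"
  then show "block c a b j \<noteq> [] \<and> successively adj (block c a b j)"
    using block_nonempty[of j] successively_block[of j] by auto
next
  show "successively (\<lambda>i j. adj (last (block c a b i)) (hd (block c a b j))) [a..<Suc b]"
  proof (rule successively_upt)
    fix t assume t: "a \<le> t" "Suc t < Suc b"
    have "(Suc t, 0) \<in> verts" using t adm_bounds sz_pos[of "Suc t"] by (simp add: mem_verts)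
    then show "adj (last (block c a b t)) (hd (block c a b (Suc t)))"
      using t last_block[of t] hd_block[of "Suc t"] by (auto intro: adj_cross)
  qed
qed

lemma successively_backward: "successively adj (backward a b)"
  unfolding backward_def successively_map successively_rev
  by (rule successively_upt) (use inner_one_verts in \<open>auto intro!: adj_cross\<close>)

lemma backward_ends:
  assumes "Suc a < b" shows "backward a b \<noteq> []" "hd (backward a b) = (b - 1, 1)" "last (backward a b) = (Suc a, 1)"
  using assms by (auto simp: backward_def hd_map last_map hd_rev last_rev)

lemma successively_window: "successively adj (window c a b)"
proof -
  have "adj (last (forward c a b)) (hd (backward a b))" if "backward a b \<noteq> []"
  proof -
    have "Suc a < b" using that by (auto simp: backward_def)
    then have "hd (backward a b) \<in> verts" "Suc (fst (hd (backward a b))) = fst (last (forward c a b))"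
      unfolding backward_ends(2)[OF \<open>Suc a < b\<close>] using forward_ends(4) inner_one_verts by simp_all
    then show ?thesis using forward_ends(3) adj_cross by blast
  qed
  then show ?thesis
    unfolding window_def successively_append_iff using successively_forward successively_backward by blast
qed

lemma last_window: "last (window c a b) \<in> verts \<and> fst (last (window c a b)) = Suc a"
proof (cases "Suc a < b")
  case True
  then have "last (window c a b) = (Suc a, 1)"
    unfolding window_def last_appendR[OF backward_ends(1)[OF True]] by (rule backward_ends(3))
  then show ?thesis using inner_one_verts[of "Suc a"] True by simp
next
  case False
  then have "b = Suc a" using adm_bounds by simp
  then have "last (window c a b) = last (forward c a b)" unfolding window_def backward_def by simp
  then show ?thesis using forward_ends \<open>b = Suc a\<close> by simp
qed

lemma window_is_cycle: "is_cycle verts adj (window c a b)"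
proof -
  have "hd (window c a b) = (a, 0)"
    unfolding window_def hd_append2[OF forward_ends(1)] by (rule forward_ends(2))
  moreover have "(a, 0) \<in> verts" using adm_bounds sz_pos[of a] by (simp add: mem_verts)
  moreover have "3 \<le> length (window c a b)" using adm window_length unfolding admissible_def by simp
  ultimately show ?thesis
    using window_distinct window_subset successively_window last_window unfolding is_cycle_iff
    by (auto intro: adj_cross)
qed

lemma window_split:
  assumes "a \<le> i" "i \<le> b"
  obtains pre post where "window c a b = pre @ block c a b i @ post"
    "i < b \<Longrightarrow> post \<noteq> [] \<and> hd post = (Suc i, 0)"
proof -
  have "[a..<Suc b] = [a..<i] @ i # [Suc i..<Suc b]"
    using assms by (metis le_SucI le_add_diff_inverse upt_add_eq_append upt_conv_Cons le_imp_less_Suc)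
  then have "window c a b = concat (map (block c a b) [a..<i]) @ block c a b i @
      (concat (map (block c a b) [Suc i..<Suc b]) @ backward a b)"
    unfolding window_def forward_def by simp
  moreover have "concat (map (block c a b) [Suc i..<Suc b]) = block c a b (Suc i) @ concat (map (block c a b) [Suc (Suc i)..<Suc b])"
    if "i < b" using that by (simp add: upt_conv_Cons del: upt_Suc)
  moreover have "block c a b (Suc i) \<noteq> [] \<and> hd (block c a b (Suc i)) = (Suc i, 0)" if "i < b"
    using that assms block_nonempty[of "Suc i"] hd_block[of "Suc i"] by simp
  ultimately show thesis using that by auto
qed

lemma window_cross_edge:
  assumes "a \<le> i" "i < b"
  shows "\<exists>p q. fst p = i \<and> fst q = Suc i \<and> edge_on_cycle p q (window c a b)"
proof -
  obtain pre post where w: "window c a b = pre @ block c a b i @ post"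
    "i < b \<Longrightarrow> post \<noteq> [] \<and> hd post = (Suc i, 0)"
    using window_split[of i] assms by (meson less_imp_le)
  then have "post \<noteq> []" "hd post = (Suc i, 0)" using assms(2) by auto
  let ?p = "last (block c a b i)"
  have "block c a b i = butlast (block c a b i) @ [?p]" using block_nonempty[of i] assms by simp
  moreover have "post = (Suc i, 0) # tl post" using \<open>post \<noteq> []\<close> \<open>hd post = (Suc i, 0)\<close> by (cases post) auto
  ultimately have "window c a b = (pre @ butlast (block c a b i)) @ ?p # (Suc i, 0) # tl post"
    using w(1) by (metis append.assoc append_Cons append_Nil)
  then have "edge_on_cycle ?p (Suc i, 0) (window c a b)" by (metis edge_on_cycle_split)
  then show ?thesis using last_block(2)[of i] assms by fastforce
qed

lemma window_layer_edge:
  assumes "a \<le> i" "i \<le> b" "2 \<le> length (picks c a b i)"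
  shows "\<exists>q. fst q = i \<and> q \<noteq> (i, 0) \<and> edge_on_cycle (i, 0) q (window c a b)"
proof -
  obtain s rest where ps: "picks c a b i = 0 # s # rest"
    using assms(3) picks_Cons[OF assms(1,2)] by (metis Suc_le_length_iff length_Cons numeral_2_eq_2 Suc_le_mono)
  then have "s \<noteq> 0" using distinct_picks[of i] by auto
  obtain pre post where "window c a b = pre @ block c a b i @ post"
    using window_split[OF assms(1,2)] by blast
  then have "window c a b = pre @ (i, 0) # (i, s) # (map (Pair i) rest @ post)"
    using ps by (simp add: block_def)
  then show ?thesis using \<open>s \<noteq> 0\<close> by (metis edge_on_cycle_split fst_conv prod.inject)
qed

end

text \<open>
  Bounds on the number of vertices a window cycle on [a, b] may use in layer j. The minimum is one
  larger in the layer sp, so that the cycle passes an edge inside that layer; a value of sp outside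
  [a, b] imposes nothing.
\<close>

definition min_pick :: "nat \<Rightarrow> nat \<Rightarrow> nat \<Rightarrow> nat \<Rightarrow> nat" where
  "min_pick sp a b j = (if j = a \<or> j = b then 1 else 2) + (if j = sp then 1 else 0)"

definition max_pick :: "nat \<Rightarrow> nat \<Rightarrow> nat \<Rightarrow> nat" where
  "max_pick a b j = (if j = a \<or> j = b then (if clique j then sz j else 1) else sz j)"

definition order :: nat where
  "order = sum sz {0..D}"

lemma sum_min_pick:
  assumes "a < b"
  shows "sum (min_pick sp a b) {a..b} = 2 * (b - a) + (if a \<le> sp \<and> sp \<le> b then 1 else 0)"
proof -
  let ?base = "\<lambda>j. if j = a \<or> j = b then 1 else 2::nat"
  have "(\<Sum>j\<in>{a..b}. ?base j + (if j = a then 1 else 0) + (if j = b then 1 else 0)) = (\<Sum>j\<in>{a..b}. 2)"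
    using assms by (intro sum.cong) auto
  then have "sum ?base {a..b} + 2 = 2 * (Suc b - a)" using assms by (simp add: sum.distrib)
  moreover have "sum (min_pick sp a b) {a..b} = sum ?base {a..b} + (\<Sum>j\<in>{a..b}. if j = sp then 1 else 0)"
    unfolding min_pick_def by (simp add: sum.distrib)
  ultimately show ?thesis using assms by (simp add: sum.delta')
qed

lemma sum_max_pick_full: "sum (max_pick 0 D) {0..D} = order"
  unfolding order_def max_pick_def using clique_0 clique_D by (intro sum.cong) auto

lemma window_of_length:
  assumes "a < b" "b \<le> D" "\<And>j. j \<in> {a..b} \<Longrightarrow> min_pick sp a b j \<le> max_pick a b j"
    and "sum (min_pick sp a b) {a..b} \<le> k" "k \<le> sum (max_pick a b) {a..b}" "3 \<le> k"
  shows "\<exists>c. admissible c a b \<and> length (window c a b) = k \<and>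
     (a \<le> sp \<and> sp \<le> b \<longrightarrow> 2 \<le> length (picks c a b sp))"
proof -
  obtain c where c: "\<forall>j\<in>{a..b}. min_pick sp a b j \<le> c j \<and> c j \<le> max_pick a b j" "sum c {a..b} = k"
    using sum_between_bounds[of "{a..b}" "min_pick sp a b" "max_pick a b" k] assms(3-5) by auto
  have ends: "min_pick sp a b j \<le> c j \<and> c j \<le> max_pick a b j" if "j = a \<or> j = b" for j
    using c(1) that assms(1) by auto
  have inner: "min_pick sp a b j \<le> c j \<and> c j \<le> max_pick a b j" if "a < j" "j < b" for j
    using c(1) that by auto
  have "admissible c a b"
    unfolding admissible_def
  proof (intro conjI allI impI)
    show "1 \<le> c a" "c a \<le> (if clique a then sz a else 1)"
      using ends[of a] by (auto simp: min_pick_def max_pick_def)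
    show "1 \<le> c b" "c b \<le> (if clique b then sz b else 1)"
      using ends[of b] by (auto simp: min_pick_def max_pick_def)
    fix j assume "a < j \<and> j < b"
    then show "2 \<le> c j" "c j \<le> sz j"
      using inner[of j] by (auto simp: min_pick_def max_pick_def split: if_splits)
  qed (use assms c in auto)
  moreover have "2 \<le> length (picks c a b sp)" if sp: "a \<le> sp" "sp \<le> b"
  proof (cases "sp = a \<or> sp = b")
    case True
    then show ?thesis
      using ends[of sp] length_picks[OF \<open>admissible c a b\<close> sp] by (auto simp: min_pick_def)
  next
    case False
    then show ?thesis
      using inner[of sp] sp length_picks[OF \<open>admissible c a b\<close> sp] by (auto simp: min_pick_def)
  qed
  ultimately show ?thesis using window_length c(2) by blast
qed

lemma min_pick_le_max_pick:
  assumes "a < b" "b \<le> D" "a \<le> sp \<and> sp \<le> b \<longrightarrow> clique sp \<and> 2 \<le> sz sp" "j \<in> {a..b}"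
  shows "min_pick sp a b j \<le> max_pick a b j"
proof (cases "j = a \<or> j = b")
  case True
  then show ?thesis using assms sz_pos[of j] by (auto simp: min_pick_def max_pick_def)
next
  case False
  then have "0 < j" "j < D" using assms by auto
  then show ?thesis
    using assms False sz_inner[of j] sz_inner_clique[of j] by (auto simp: min_pick_def max_pick_def)
qed

lemma spare_layer_slack:
  assumes "spare_layer D sz clique j" "a \<le> j" "j \<le> b" "a < b" "b \<le> D" "j \<noteq> sp"
  shows "min_pick sp a b j < max_pick a b j"
  using assms unfolding spare_layer_def by (auto simp: min_pick_def max_pick_def split: if_splits)

definition window_chain :: "nat \<Rightarrow> (nat \<Rightarrow> nat) \<Rightarrow> (nat \<Rightarrow> nat) \<Rightarrow> bool" where
  "window_chain sp A B \<longleftrightarrow> A (D - 1) = 0 \<and> B (D - 1) = D \<and>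
     (\<forall>t \<le> D - 1. A t < B t \<and> B t \<le> D \<and> B t - A t = Suc t) \<and>
     (\<forall>t < D - 1. \<exists>j\<in>{A t..B t}. min_pick sp (A t) (B t) j < max_pick (A t) (B t) j)"

text \<open>
  Along a window chain the minimal length grows by 2 per step, while the slack in each window but
  the last makes its maximal length exceed its minimal one; so consecutive ranges of lengths leave
  no gap, and together they cover [3, order].
\<close>

lemma window_chain_cycle:
  assumes chain: "window_chain sp A B" and uniform: "\<And>t. t \<le> D - 1 \<Longrightarrow> (A t \<le> sp \<and> sp \<le> B t \<longleftrightarrow> s)"
    and sp: "sp \<le> D \<Longrightarrow> clique sp \<and> 2 \<le> sz sp" and k: "3 \<le> k" "k \<le> order"
  shows "\<exists>t c. t \<le> D - 1 \<and> admissible c (A t) (B t) \<and> length (window c (A t) (B t)) = k \<and>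
    (A t \<le> sp \<and> sp \<le> B t \<longrightarrow> 2 \<le> length (picks c (A t) (B t) sp))"
proof -
  define lo where "lo t = sum (min_pick sp (A t) (B t)) {A t..B t}" for t
  define hi where "hi t = sum (max_pick (A t) (B t)) {A t..B t}" for t
  have win: "A t < B t" "B t \<le> D" "B t - A t = Suc t" if "t \<le> D - 1" for t
    using chain that unfolding window_chain_def by auto
  have le: "min_pick sp (A t) (B t) j \<le> max_pick (A t) (B t) j" if "t \<le> D - 1" "j \<in> {A t..B t}" for t j
    using win[OF that(1)] that(2) sp by (intro min_pick_le_max_pick) auto
  have lo_eq: "lo t = 2 * Suc t + (if s then 1 else 0)" if "t \<le> D - 1" for t
    using sum_min_pick[of "A t" "B t" sp] win[OF that] uniform[OF that] unfolding lo_def by auto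
  have "lo (Suc t) \<le> Suc (hi t)" if "t < D - 1" for t
  proof -
    have "lo t < hi t" unfolding lo_def hi_def
      by (rule sum_strict_mono_ex1) (use le chain that in \<open>auto simp: window_chain_def\<close>)
    then show ?thesis using lo_eq[of t] lo_eq[of "Suc t"] that by simp
  qed
  moreover have "lo 0 \<le> k" using lo_eq[of 0] k by simp
  moreover have "k \<le> hi (D - 1)" using k chain sum_max_pick_full unfolding hi_def window_chain_def by simp
  ultimately obtain t where "t \<le> D - 1" "lo t \<le> k" "k \<le> hi t"
    using interval_chain_cover[of lo k hi "D - 1"] by blast
  moreover from this obtain c where "admissible c (A t) (B t)" "length (window c (A t) (B t)) = k"
    "A t \<le> sp \<and> sp \<le> B t \<longrightarrow> 2 \<le> length (picks c (A t) (B t) sp)"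
    using window_of_length[of "A t" "B t" sp k] win le k unfolding lo_def hi_def by blast
  ultimately show ?thesis by blast
qed

lemma cross_window_chain:
  assumes "i < D"
  shows "window_chain (Suc D) (\<lambda>t. i - (t - (D - Suc i))) (\<lambda>t. min D (Suc i + t))"
  unfolding window_chain_def
proof (intro conjI allI impI)
  fix t
  let ?A = "i - (t - (D - Suc i))" and ?B = "min D (Suc i + t)"
  \<comment> \<open>Every window contains layers i and i + 1, one of which has room to spare.\<close>
  have w: "?A \<le> i" "Suc i \<le> ?B" "?A < ?B" "?B \<le> D" using assms by auto
  from spare_pairs[OF assms] show "\<exists>j\<in>{?A..?B}. min_pick (Suc D) ?A ?B j < max_pick ?A ?B j"
  proof
    assume "spare_layer D sz clique i"
    then show ?thesis using spare_layer_slack[of i ?A ?B "Suc D"] w by (intro bexI[of _ i]) auto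
  next
    assume "spare_layer D sz clique (Suc i)"
    then show ?thesis using spare_layer_slack[of "Suc i" ?A ?B "Suc D"] w by (intro bexI[of _ "Suc i"]) auto
  qed
qed (use assms in auto)

lemma layer_window_chain_right:
  assumes "1 \<le> i" "Suc (Suc i) \<le> D" "clique i"
  shows "window_chain i (\<lambda>t. i - (t - (D - Suc i))) (\<lambda>t. min D (Suc i + t))"
  unfolding window_chain_def
proof (intro conjI allI impI)
  fix t assume t: "t < D - 1"
  let ?A = "i - (t - (D - Suc i))" and ?B = "min D (Suc i + t)"
  \<comment> \<open>Layer i has room to spare while it ends the window; afterwards the window contains layers
    i + 1 and i + 2, one of which has room to spare.\<close>
  show "\<exists>j\<in>{?A..?B}. min_pick i ?A ?B j < max_pick ?A ?B j"
  proof (cases "t \<le> D - Suc i")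
    case True
    have "3 \<le> sz i" using sz_inner_clique[of i] assms by simp
    then show ?thesis using True assms by (intro bexI[of _ i]) (auto simp: min_pick_def max_pick_def)
  next
    case False
    then have w: "?B = D" "?A \<le> i" "?A < ?B" using t assms by auto
    have "Suc i < D" using assms(2) by simp
    from spare_pairs[OF this] show ?thesis
    proof
      assume "spare_layer D sz clique (Suc i)"
      then show ?thesis using spare_layer_slack[of "Suc i" ?A ?B i] w assms(2)
        by (intro bexI[of _ "Suc i"]) auto
    next
      assume "spare_layer D sz clique (Suc (Suc i))"
      then show ?thesis using spare_layer_slack[of "Suc (Suc i)" ?A ?B i] w assms(2)
        by (intro bexI[of _ "Suc (Suc i)"]) auto
    qed
  qed
qed (use assms in auto)

lemma layer_window_chain_left:
  assumes "1 \<le> i" "i \<le> D" "D < Suc (Suc i)" "clique i" "2 \<le> sz i"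
  shows "window_chain i (\<lambda>t. i - Suc t) (\<lambda>t. max i (Suc t))"
  unfolding window_chain_def
proof (intro conjI allI impI)
  fix t assume t: "t < D - 1"
  \<comment> \<open>Layer i (that is, D - 1 or D) stays the right end of the window, with room to spare.\<close>
  then have "2 \<le> D" by simp
  then have "i \<noteq> D" using sz_D assms by auto
  then have "3 \<le> sz i" using sz_inner_clique[of i] assms by simp
  moreover have "max i (Suc t) = i" using t assms by auto
  ultimately show "\<exists>j\<in>{i - Suc t..max i (Suc t)}. min_pick i (i - Suc t) (max i (Suc t)) j
      < max_pick (i - Suc t) (max i (Suc t)) j"
    using assms t by (intro bexI[of _ i]) (auto simp: min_pick_def max_pick_def)
qed (use assms in auto)

text \<open>Vertices in the same layer are twins: transposing them is an automorphism.\<close>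

lemma adj_transpose:
  assumes "u \<in> verts" "p \<in> verts" "fst u = fst p" "adj x y"
  shows "adj (Transposition.transpose u p x) (Transposition.transpose u p y)"
proof -
  have "fst (Transposition.transpose u p z) = fst z" for z
    using assms(3) by (simp add: transpose_def)
  moreover have "Transposition.transpose u p z \<in> verts" if "z \<in> verts" for z
    using assms(1,2) that by (simp add: transpose_def)
  ultimately show ?thesis using assms(4) by (auto simp: adj_def transpose_eq_iff)
qed

lemma move_edge_on_cycle:
  assumes cs: "is_cycle verts adj cs" "edge_on_cycle p q cs" "p \<noteq> q"
    and uv: "u \<in> verts" "v \<in> verts" "u \<noteq> v" "fst u = fst p" "fst v = fst q"
  shows "\<exists>cs'. is_cycle verts adj cs' \<and> length cs' = length cs \<and> edge_on_cycle u v cs'"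
proof -
  have pq: "p \<in> verts" "q \<in> verts"
    using edge_on_cycle_in_set[OF cs(2)] cs(1) by (auto simp: is_cycle_iff)
  have cycle: "is_cycle verts adj (map (Transposition.transpose x y) zs)"
    if "x \<in> verts" "y \<in> verts" "fst x = fst y" "is_cycle verts adj zs" for x y zs
  proof (rule is_cycle_map[OF inj_transpose _ _ that(4)])
    show "Transposition.transpose x y ` verts \<subseteq> verts" using that(1,2) by (auto simp: transpose_def)
  qed (rule adj_transpose[OF that(1-3)])
  define q' where "q' = Transposition.transpose u p q"
  have q': "q' \<in> verts" "fst q' = fst q" "q' \<noteq> u"
    using pq uv cs(3) unfolding q'_def by (auto simp: transpose_def)
  let ?cs = "map (Transposition.transpose v q') (map (Transposition.transpose u p) cs)"
  have c1: "is_cycle verts adj (map (Transposition.transpose u p) cs)"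
    using cycle pq uv cs(1) by simp
  have "is_cycle verts adj ?cs" by (rule cycle[OF uv(2) q'(1) _ c1]) (use uv(5) q'(2) in simp)
  moreover have "edge_on_cycle u q' (map (Transposition.transpose u p) cs)"
    using edge_on_cycle_map[OF cs(2), of "Transposition.transpose u p"]
    unfolding q'_def transpose_apply_second .
  then have "edge_on_cycle u v ?cs"
    using edge_on_cycle_map[of u q' _ "Transposition.transpose v q'"] uv(3) q'(3)
    unfolding transpose_apply_second transpose_apply_other[OF uv(3) q'(3)[symmetric]]
    by blast
  ultimately show ?thesis by auto
qed

lemma cycle_through_cross_edge:
  assumes x: "x \<in> verts" "y \<in> verts" "Suc (fst x) = fst y" and k: "3 \<le> k" "k \<le> order"
  shows "\<exists>cs. is_cycle verts adj cs \<and> length cs = k \<and> edge_on_cycle x y cs"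
proof -
  define i where "i = fst x"
  have "i < D" using x unfolding verts_def i_def by auto
  let ?A = "\<lambda>t. i - (t - (D - Suc i))" and ?B = "\<lambda>t. min D (Suc i + t)"
  have "\<exists>t c. t \<le> D - 1 \<and> admissible c (?A t) (?B t) \<and> length (window c (?A t) (?B t)) = k \<and>
      (?A t \<le> Suc D \<and> Suc D \<le> ?B t \<longrightarrow> 2 \<le> length (picks c (?A t) (?B t) (Suc D)))"
    by (rule window_chain_cycle[OF cross_window_chain[OF \<open>i < D\<close>], of False]) (use k in auto)
  then obtain t c where c: "admissible c (?A t) (?B t)" "length (window c (?A t) (?B t)) = k"
    by blast
  have "?A t \<le> i" "i < ?B t" using \<open>i < D\<close> by auto
  then obtain p q where pq: "fst p = i" "fst q = Suc i" "edge_on_cycle p q (window c (?A t) (?B t))"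
    using window_cross_edge[OF c(1)] by blast
  moreover have "p \<noteq> q" "x \<noteq> y" "fst x = fst p" "fst y = fst q" using pq(1,2) x(3) i_def by auto
  ultimately show ?thesis
    using move_edge_on_cycle[OF window_is_cycle[OF c(1)] pq(3) _ x(1,2)] c(2) by metis
qed

lemma cycle_through_layer_edge:
  assumes uv: "u \<in> verts" "v \<in> verts" "u \<noteq> v" "fst u = fst v" "clique (fst u)"
    and k: "3 \<le> k" "k \<le> order"
  shows "\<exists>cs. is_cycle verts adj cs \<and> length cs = k \<and> edge_on_cycle u v cs"
proof -
  define i where "i = fst u"
  have "snd u \<noteq> snd v" using uv(3,4) by (cases u, cases v) auto
  then have "2 \<le> sz i" "i \<le> D" "clique i" using uv unfolding verts_def i_def by auto
  moreover from this have "1 \<le> i" using sz_0 by (cases "i = 0") auto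
  ultimately have i: "1 \<le> i" "i \<le> D" "clique i" "2 \<le> sz i" by simp_all
  obtain A B where chain: "window_chain i A B" and around: "\<And>t. A t \<le> i \<and> i \<le> B t"
  proof (cases "Suc (Suc i) \<le> D")
    case True
    then show thesis using that[OF layer_window_chain_right[OF i(1) True i(3)]] by auto
  next
    case False
    then show thesis using that[OF layer_window_chain_left[OF i(1,2) _ i(3,4)]] by auto
  qed
  have "\<exists>t c. t \<le> D - 1 \<and> admissible c (A t) (B t) \<and> length (window c (A t) (B t)) = k \<and>
      (A t \<le> i \<and> i \<le> B t \<longrightarrow> 2 \<le> length (picks c (A t) (B t) i))"
    by (rule window_chain_cycle[OF chain, of True]) (use around i k in auto)
  then obtain t c where c: "admissible c (A t) (B t)" "length (window c (A t) (B t)) = k"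
    "2 \<le> length (picks c (A t) (B t) i)"
    using around by blast
  then obtain q where q: "fst q = i" "q \<noteq> (i, 0)" "edge_on_cycle (i, 0) q (window c (A t) (B t))"
    using window_layer_edge[OF c(1) _ _ c(3)] around by blast
  moreover have "fst u = fst (i, 0)" "fst v = fst q" using q(1) uv(4) i_def by auto
  ultimately show ?thesis
    using move_edge_on_cycle[OF window_is_cycle[OF c(1)] q(3) q(2)[symmetric] uv(1-3)] c(2) by metis
qed

lemma finite_verts: "finite verts" and card_verts: "card verts = order"
proof -
  have "verts = (SIGMA j:{0..D}. {0..<sz j})" unfolding verts_def by auto
  then show "finite verts" "card verts = order" unfolding order_def by simp_all
qed

lemma simple_graph: "simple_graph verts adj"
  unfolding simple_graph_def using finite_verts by (auto simp: adj_def)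

lemma edge_pancyclic: "edge_pancyclic verts adj"
  unfolding edge_pancyclic_def
proof (intro allI impI)
  fix k u v assume "3 \<le> k \<and> k \<le> card verts" and uv: "adj u v"
  then have k: "3 \<le> k" "k \<le> order" using card_verts by auto
  have uv_verts: "u \<in> verts" "v \<in> verts" "u \<noteq> v" using uv unfolding adj_def by auto
  consider "Suc (fst u) = fst v" | "Suc (fst v) = fst u" | "fst u = fst v" "clique (fst u)"
    using uv unfolding adj_def by blast
  then show "\<exists>cs. is_cycle verts adj cs \<and> length cs = k \<and> edge_on_cycle u v cs"
  proof cases
    case 1
    then show ?thesis using cycle_through_cross_edge[OF uv_verts(1,2) _ k] by blast
  next
    case 2
    then obtain cs where "is_cycle verts adj cs" "length cs = k" "edge_on_cycle v u cs"
      using cycle_through_cross_edge[OF uv_verts(2,1) _ k] by blast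
    then show ?thesis using edge_on_cycle_commute[of v u cs] by blast
  next
    case 3
    then show ?thesis using cycle_through_layer_edge[OF uv_verts _ _ k] by blast
  qed
qed

end

section \<open>The extremal graphs\<close>

context path_blowup
begin

definition nat_verts :: "nat set" where
  "nat_verts = prod_encode ` verts"

definition nat_adj :: "nat \<Rightarrow> nat \<Rightarrow> bool" where
  "nat_adj u v \<longleftrightarrow> adj (prod_decode u) (prod_decode v)"

lemma simple_graph_nat: "simple_graph nat_verts nat_adj"
  unfolding simple_graph_def
proof (intro conjI allI impI)
  show "finite nat_verts" unfolding nat_verts_def using finite_verts by simp
  fix u v assume "nat_adj u v"
  then have uv: "adj (prod_decode u) (prod_decode v)" unfolding nat_adj_def .
  then have "prod_decode u \<in> verts" "prod_decode v \<in> verts" unfolding adj_def by auto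
  then show "u \<in> nat_verts" "v \<in> nat_verts" unfolding nat_verts_def by (metis imageI prod_decode_inverse)+
  show "u \<noteq> v" using uv unfolding adj_def by auto
  show "nat_adj v u" using adj_sym[OF uv] unfolding nat_adj_def .
qed

lemma card_nat_verts: "card nat_verts = order"
  unfolding nat_verts_def using card_verts by (simp add: card_image inj_prod_encode)

lemma edge_pancyclic_nat: "edge_pancyclic nat_verts nat_adj"
  unfolding edge_pancyclic_def
proof (intro allI impI)
  fix k u v assume k: "3 \<le> k \<and> k \<le> card nat_verts" and uv: "nat_adj u v"
  have "k \<le> card verts" using k card_nat_verts card_verts by simp
  then obtain cs where cs: "is_cycle verts adj cs" "length cs = k"
      "edge_on_cycle (prod_decode u) (prod_decode v) cs"
    using edge_pancyclic uv k unfolding edge_pancyclic_def nat_adj_def by blast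
  have "is_cycle nat_verts nat_adj (map prod_encode cs)"
    by (rule is_cycle_map[OF _ _ _ cs(1)]) (auto simp: inj_prod_encode nat_verts_def nat_adj_def)
  moreover have "edge_on_cycle u v (map prod_encode cs)"
    using edge_on_cycle_map[OF cs(3), of prod_encode] by simp
  ultimately show "\<exists>cs. is_cycle nat_verts nat_adj cs \<and> length cs = k \<and> edge_on_cycle u v cs"
    using cs(2) by auto
qed

lemma nat_adj_ends: "nat_adj (prod_encode (0, 0)) (prod_encode (1, 0))"
  unfolding nat_adj_def adj_def verts_def using depth_pos sz_pos[of 0] sz_pos[of 1] by auto

lemma diameter_nat_ge: "enat D \<le> diameter nat_verts nat_adj"
proof -
  let ?x = "prod_encode (0, 0)" and ?y = "prod_encode (D, 0)"
  have x: "?x \<in> nat_verts" and y: "?y \<in> nat_verts"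
    unfolding nat_verts_def verts_def using sz_pos[of 0] sz_pos[of D] by auto
  have "enat D \<le> gdist nat_verts nat_adj ?x ?y" unfolding gdist_def
  proof (rule INF_greatest)
    fix xs assume xs: "xs \<in> {xs. walk nat_verts nat_adj xs \<and> hd xs = ?x \<and> last xs = ?y}"
    have "fst (prod_decode (xs ! t)) \<le> t" if "t < length xs" for t
      using that
    proof (induction t)
      case 0 then show ?case using xs by (cases xs) auto
    next
      case (Suc t)
      then have "nat_adj (xs ! t) (xs ! Suc t)" using xs unfolding walk_def by auto
      then show ?case using Suc adj_layer_le unfolding nat_adj_def by fastforce
    qed
    moreover have "xs \<noteq> []" using xs by (auto simp: walk_def)
    then have "xs ! (length xs - 1) = ?y" using xs by (simp add: last_conv_nth)
    ultimately show "enat D \<le> enat (length xs - 1)"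
      using \<open>xs \<noteq> []\<close> by (metis diff_less fst_conv length_greater_0_conv less_one enat_ord_simps(1) prod_encode_inverse)
  qed
  then show ?thesis unfolding diameter_def by (intro SUP_upper2[OF x] SUP_upper2[OF y])
qed

end

text \<open>
  The extremal graph for order n has D = 2n/5 (rounded down) layers beyond layer 0. Layers 0 and D
  are single vertices (unless D = 1), the inner layers from 2 on are triangles (odd layers and
  layer D - 1) or independent pairs, and layer 1 takes the remaining vertices.
\<close>

definition extremal_clique :: "nat \<Rightarrow> nat \<Rightarrow> bool" where
  "extremal_clique D j \<longleftrightarrow> j = 0 \<or> j = D \<or> odd j \<or> Suc j = D"

definition extremal_size :: "nat \<Rightarrow> nat \<Rightarrow> nat \<Rightarrow> nat" where
  "extremal_size n D j =
    (if j = 0 then 1 else if j = D then (if D = 1 then n - 1 else 1)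
     else if j = 1 then n + 3 - (2 * D + (D + 1) div 2) else if extremal_clique D j then 3 else 2)"

lemma sum_alternating_2_3: "(\<Sum>j<m. if odd j then 3 else 2::nat) = 2 * m + m div 2"
proof (induction m)
  case (Suc m)
  then have "(\<Sum>j<Suc m. if odd j then 3 else 2::nat) = 2 * m + m div 2 + (if odd m then 3 else 2)"
    by simp
  also have "\<dots> = 2 * Suc m + Suc m div 2" by presburger
  finally show ?case .
qed simp

lemma sum_extremal_inner:
  assumes "2 \<le> D"
  shows "(\<Sum>j\<in>{2..<D}. if odd j \<or> Suc j = D then 3 else 2::nat) + 5 = 2 * D + (D + 1) div 2"
proof -
  let ?g = "\<lambda>j. if odd j then 3 else 2::nat"
  have "(\<Sum>j\<in>{2..<D}. if odd j \<or> Suc j = D then 3 else 2::nat) =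
      (\<Sum>j\<in>{2..<D}. ?g j + (if j = D - 1 then (if even j then 1 else 0) else 0))"
    by (intro sum.cong) auto
  also have "\<dots> = (\<Sum>j\<in>{2..<D}. ?g j) + (if D - 1 \<in> {2..<D} \<and> even (D - 1) then 1 else 0)"
    by (simp add: sum.distrib sum.delta')
  also have "(\<Sum>j\<in>{2..<D}. ?g j) + 5 = (\<Sum>j<D. ?g j)"
  proof -
    have "{..<D} = {0, 1} \<union> {2..<D}" using assms by auto
    then show ?thesis by (simp add: sum.union_disjoint)
  qed
  moreover have "(D - 1 \<in> {2..<D} \<and> even (D - 1)) \<longleftrightarrow> odd D" using assms by auto presburger+
  moreover have "(D + 1) div 2 = D div 2 + (if odd D then 1 else 0)" by presburger
  ultimately show ?thesis using sum_alternating_2_3[of D] by (cases "odd D") simp_all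
qed

lemma extremal_depth:
  fixes n :: nat
  defines "D \<equiv> 2 * n div 5"
  assumes "3 \<le> n"
  shows "1 \<le> D" "2 * D + (D + 1) div 2 \<le> n"
proof -
  have "5 * D \<le> 2 * n" "2 * ((D + 1) div 2) \<le> D + 1" unfolding D_def by simp_all
  then show "2 * D + (D + 1) div 2 \<le> n" by linarith
  show "1 \<le> D" using assms unfolding D_def by simp
qed

lemma extremal_path_blowup:
  assumes "3 \<le> n" and D1: "1 \<le> D" and nb: "2 * D + (D + 1) div 2 \<le> n"
  shows "path_blowup D (extremal_size n D) (extremal_clique D)"
proof -
  have sz1: "3 \<le> extremal_size n D 1" if "2 \<le> D"
    using that nb unfolding extremal_size_def by simp
  show ?thesis
  proof
    show "1 \<le> extremal_size n D j" if "j \<le> D" for j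
      using that sz1 D1 assms unfolding extremal_size_def by (auto split: if_splits)
    show "2 \<le> extremal_size n D j" if "0 < j" "j < D" for j
      using that sz1 unfolding extremal_size_def by (cases "j = 1") auto
    show "3 \<le> extremal_size n D j" if "0 < j" "j < D" "extremal_clique D j" for j
      using that sz1 unfolding extremal_size_def by (cases "j = 1") auto
    show "spare_layer D (extremal_size n D) (extremal_clique D) i \<or>
        spare_layer D (extremal_size n D) (extremal_clique D) (Suc i)" if i: "i < D" for i
    proof (cases "i = 0")
      case True
      then show ?thesis
        using sz1 assms D1 unfolding spare_layer_def extremal_clique_def
        by (cases "D = 1") (simp_all add: extremal_size_def)
    next
      case False
      have "3 \<le> extremal_size n D i" if "odd i"
        using sz1 i that \<open>i \<noteq> 0\<close> unfolding extremal_size_def extremal_clique_def by (cases "i = 1") simp_all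
      moreover have "3 \<le> extremal_size n D (Suc i)" if "even i" "Suc i < D"
        using that \<open>i \<noteq> 0\<close> unfolding extremal_size_def extremal_clique_def by simp
      moreover have "3 \<le> extremal_size n D i" if "even i" "Suc i = D"
        using that \<open>i \<noteq> 0\<close> unfolding extremal_size_def extremal_clique_def by (cases "i = 1") simp_all
      ultimately show ?thesis
        using False i unfolding spare_layer_def extremal_clique_def by (cases "Suc i = D") auto
    qed
  qed (use D1 in \<open>auto simp: extremal_size_def extremal_clique_def\<close>)
qed

lemma extremal_order:
  assumes "3 \<le> n" "1 \<le> D" and nb: "2 * D + (D + 1) div 2 \<le> n"
  shows "path_blowup.order D (extremal_size n D) = n"
proof -
  interpret path_blowup D "extremal_size n D" "extremal_clique D"
    using extremal_path_blowup[OF assms] .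
  show ?thesis
  proof (cases "D = 1")
    case True
    then show ?thesis using assms unfolding order_def extremal_size_def by (simp add: atLeast0_atMost_Suc)
  next
    case False
    then have D2: "2 \<le> D" using depth_pos by simp
    have "{0..D} = {0, 1, D} \<union> {2..<D}" using D2 by auto
    then have "order = sum (extremal_size n D) ({0, 1, D} \<union> {2..<D})" unfolding order_def by simp
    also have "\<dots> = (\<Sum>j\<in>{0, 1, D}. extremal_size n D j) + (\<Sum>j\<in>{2..<D}. extremal_size n D j)"
      by (rule sum.union_disjoint) auto
    also have "(\<Sum>j\<in>{0, 1, D}. extremal_size n D j) = n + 5 - (2 * D + (D + 1) div 2)"
      using D2 nb unfolding extremal_size_def by simp
    also have "(\<Sum>j\<in>{2..<D}. extremal_size n D j) = (\<Sum>j\<in>{2..<D}. if odd j \<or> Suc j = D then 3 else 2)"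
      unfolding extremal_size_def extremal_clique_def by (intro sum.cong) auto
    finally show ?thesis
      using sum_extremal_inner[OF D2] nb by linarith
  qed
qed

lemma extremal_graph:
  assumes "3 \<le> n"
  shows "\<exists>(V :: nat set) E. simple_graph V E \<and> card V = n \<and> (\<exists>u v. E u v) \<and> edge_pancyclic V E
    \<and> diameter V E = enat (2 * n div 5)"
proof -
  define D where "D = 2 * n div 5"
  have D: "1 \<le> D" "2 * D + (D + 1) div 2 \<le> n" using extremal_depth assms unfolding D_def by auto
  interpret path_blowup D "extremal_size n D" "extremal_clique D"
    using extremal_path_blowup[OF assms D] .
  have order: "card nat_verts = n" using extremal_order[OF assms D] card_nat_verts by simp
  interpret extremal: edge_pancyclic_graph nat_verts nat_adj
    using simple_graph_nat edge_pancyclic_nat nat_adj_ends order assms by unfold_locales auto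
  have "diameter nat_verts nat_adj = enat D"
    using extremal.diameter_le diameter_nat_ge order unfolding D_def by (simp add: order_antisym)
  then show ?thesis using simple_graph_nat order nat_adj_ends edge_pancyclic_nat unfolding D_def by blast
qed

theorem theorem6:
  fixes n :: nat
  assumes "n \<ge> 3"
  shows "(\<forall>(V :: 'a set) E. simple_graph V E \<and> card V = n \<and> (\<exists>u v. E u v) \<and> edge_pancyclic V E
            \<longrightarrow> diameter V E \<le> enat (2 * n div 5))
       \<and> (\<exists>(V :: nat set) E. simple_graph V E \<and> card V = n \<and> (\<exists>u v. E u v) \<and> edge_pancyclic V E
            \<and> diameter V E = enat (2 * n div 5))"
proof (intro conjI allI impI)
  fix V :: "'a set" and E
  assume G: "simple_graph V E \<and> card V = n \<and> (\<exists>u v. E u v) \<and> edge_pancyclic V E"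
  then interpret edge_pancyclic_graph V E using assms by unfold_locales auto
  show "diameter V E \<le> enat (2 * n div 5)" using diameter_le G by simp
qed (rule extremal_graph[OF assms])

end
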